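(* For any integers $m,n\geqslant 1$ and $N\geqslant 1$, the endomorphism $\mathscr{A}_{m,n}=\sum_{1\leqslant a\leqslant m,\,1\leqslant b'\leqslant n}\tau_{ab'}$ of $V^{m,n}$ satisfies: (1) $\mathscr{A}_{m,n}$ is diagonalisable; (2) $\ker\mathscr{A}_{m,n}=V^{m,n}_0$ and $\operatorname{Im}\mathscr{A}_{m,n}=V^{m,n}_1$, so that $V^{m,n}=V^{m,n}_0\oplus V^{m,n}_1$; (3) all eigenvalues of $\mathscr{A}_{m,n}$ are real and non-negative.
   Context: $V$ is a complex vector space of dimension $N$ with basis $\{e_i\}$ and dual basis $\{e^i\}$ of $V^*$; $V^{m,n}=V^{\otimes m}\otimes V^{*\otimes n}$. For $1\leqslant a\leqslant m$, $1\leqslant b'\leqslant n$, $\mathrm{tr}_{ab'}:V^{m,n}\to V^{m-1,n-1}$ contracts the $a$-th factor $V$ with the $b'$-th factor $V^*$ (i.e. multiplies by $\langle\varphi_{b'},v_a\rangle$ and deletes both factors), and $\mathrm{tr}^+_{ab'}:V^{m-1,n-1}\to V^{m,n}$ inserts $\sum_{i=1}^N e_i\otimes e^i$ with $e_i$ in the $a$-th $V$-position and $e^i$ in the $b'$-th $V^*$-position. $\tau_{ab'}=\mathrm{tr}^+_{ab'}\circ\mathrm{tr}_{ab'}$. The traceless subspace is $V^{m,n}_0=\bigcap_{a,b'}\ker\mathrm{tr}_{ab'}$, and $V^{m,n}_1$ is the span of the images of all $\mathrm{tr}^+_{ab'}$. *)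

theory Defs
  imports Complex_Main
begin

text \<open>A tensor in V^{m,n}, V = C^N with basis e_0..e_{N-1}, is represented by its
components T(I;J) = coefficient of e_{I_1} \<otimes> ... \<otimes> e_{I_m} \<otimes> e^{J_1} \<otimes> ... \<otimes> e^{J_n},
where I, J are lists of indices.\<close>

type_synonym tensor = "nat list \<Rightarrow> nat list \<Rightarrow> complex"

definition valid_idx :: "nat \<Rightarrow> nat \<Rightarrow> nat \<Rightarrow> nat list \<Rightarrow> nat list \<Rightarrow> bool" where
  "valid_idx N m n I J \<longleftrightarrow> length I = m \<and> set I \<subseteq> {..<N} \<and> length J = n \<and> set J \<subseteq> {..<N}"

definition tens :: "nat \<Rightarrow> nat \<Rightarrow> nat \<Rightarrow> tensor set" where
  "tens N m n = {T. \<forall>I J. \<not> valid_idx N m n I J \<longrightarrow> T I J = 0}"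

definition ins_at :: "nat \<Rightarrow> nat \<Rightarrow> nat list \<Rightarrow> nat list" where
  "ins_at i k xs = take i xs @ k # drop i xs"

definition del_at :: "nat \<Rightarrow> nat list \<Rightarrow> nat list" where
  "del_at i xs = take i xs @ drop (Suc i) xs"

text \<open>tr_{ab'} : V^{m,n} \<rightarrow> V^{m-1,n-1}, positions a, b counted from 1\<close>
definition tr :: "nat \<Rightarrow> nat \<Rightarrow> nat \<Rightarrow> nat \<Rightarrow> nat \<Rightarrow> tensor \<Rightarrow> tensor" where
  "tr N m n a b T = (\<lambda>I J. if valid_idx N (m - 1) (n - 1) I J
      then (\<Sum>k<N. T (ins_at (a - 1) k I) (ins_at (b - 1) k J)) else 0)"

text \<open>tr^+_{ab'} : V^{m-1,n-1} \<rightarrow> V^{m,n}, inserting \<Sum>_i e_i \<otimes> e^i\<close>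
definition trp :: "nat \<Rightarrow> nat \<Rightarrow> nat \<Rightarrow> nat \<Rightarrow> nat \<Rightarrow> tensor \<Rightarrow> tensor" where
  "trp N m n a b S = (\<lambda>I J. if valid_idx N m n I J \<and> I ! (a - 1) = J ! (b - 1)
      then S (del_at (a - 1) I) (del_at (b - 1) J) else 0)"

definition tau :: "nat \<Rightarrow> nat \<Rightarrow> nat \<Rightarrow> nat \<Rightarrow> nat \<Rightarrow> tensor \<Rightarrow> tensor" where
  "tau N m n a b = trp N m n a b \<circ> tr N m n a b"

definition opA :: "nat \<Rightarrow> nat \<Rightarrow> nat \<Rightarrow> tensor \<Rightarrow> tensor" where
  "opA N m n T = (\<lambda>I J. \<Sum>a\<in>{1..m}. \<Sum>b\<in>{1..n}. tau N m n a b T I J)"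

definition V0 :: "nat \<Rightarrow> nat \<Rightarrow> nat \<Rightarrow> tensor set" where
  "V0 N m n = {T \<in> tens N m n. \<forall>a\<in>{1..m}. \<forall>b\<in>{1..n}. tr N m n a b T = (\<lambda>I J. 0)}"

text \<open>V_1^{m,n}: the span (= sum) of the images of all tr^+_{ab'}\<close>
definition V1 :: "nat \<Rightarrow> nat \<Rightarrow> nat \<Rightarrow> tensor set" where
  "V1 N m n = {T. \<exists>S. (\<forall>a\<in>{1..m}. \<forall>b\<in>{1..n}. S a b \<in> tens N (m - 1) (n - 1)) \<and>
      T = (\<lambda>I J. \<Sum>a\<in>{1..m}. \<Sum>b\<in>{1..n}. trp N m n a b (S a b) I J)}"

text \<open>An endomorphism f of the subspace W is diagonalisable if W is spanned by
finitely many eigenvectors of f (hence has an eigenbasis).\<close>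
definition diagonalisable_on :: "tensor set \<Rightarrow> (tensor \<Rightarrow> tensor) \<Rightarrow> bool" where
  "diagonalisable_on W f \<longleftrightarrow> (\<exists>K::nat. \<exists>v :: nat \<Rightarrow> tensor. \<exists>l :: nat \<Rightarrow> complex.
      (\<forall>k<K. v k \<in> W \<and> v k \<noteq> (\<lambda>I J. 0) \<and> f (v k) = (\<lambda>I J. l k * v k I J)) \<and>
      (\<forall>T\<in>W. \<exists>c :: nat \<Rightarrow> complex. T = (\<lambda>I J. \<Sum>k<K. c k * v k I J)))"

end

theory Submission
  imports Defs "Jordan_Normal_Form.Jordan_Normal_Form_Existence"
begin

(* For the inner product <S, T> = sum over (I, J) of S(I;J) * cnj T(I;J), the map tr^+_{ab'} is the
   adjoint of tr_{ab'}, hence <A S, T> = sum over a, b' of <tr_{ab'} S, tr_{ab'} T>.  So the matrix of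
   A in the basis of unit tensors is Hermitian, and a Hermitian matrix has no Jordan block of size
   greater than one: A is diagonalisable.  Taking S = T shows that the eigenvalues are real and
   non-negative and that A T = 0 forces every trace of T to vanish, i.e. ker A = V_0.  Since V_1 is
   orthogonal to V_0 and contains Im A, the splitting of an eigenvector expansion into its kernel
   and non-kernel parts gives V = V_0 + Im A with Im A = V_1. *)

section \<open>Hermitian matrices are diagonalisable\<close>

lemma jordan_matrix_entries:
  fixes n_as :: "(nat \<times> 'a::{zero,one}) list"
  assumes "i < sum_list (map fst n_as)" "j < sum_list (map fst n_as)"
  shows "(j \<noteq> i \<and> j \<noteq> Suc i \<longrightarrow> jordan_matrix n_as $$ (i,j) = 0) \<and>
         (j = Suc i \<longrightarrow> jordan_matrix n_as $$ (i,j) = 0 \<or>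
            (jordan_matrix n_as $$ (i,j) = 1 \<and> jordan_matrix n_as $$ (i,i) = jordan_matrix n_as $$ (j,j)))"
  using assms
proof (induction n_as arbitrary: i j)
  case Nil
  then show ?case by simp
next
  case (Cons na rest)
  obtain n a where na: "na = (n, a)" by force
  let ?d = "sum_list (map fst rest)"
  have dims: "dim_row (jordan_block n a) = n" "dim_col (jordan_block n a) = n"
    "dim_row (jordan_matrix rest) = ?d" "dim_col (jordan_matrix rest) = ?d" by auto
  have lt: "i < n + ?d" "j < n + ?d" using Cons.prems na by auto
  show ?case
  proof (cases "i < n \<or> j < n")
    case True
    then show ?thesis using lt unfolding na jordan_matrix_Cons by (auto simp: dims)
  next
    case False
    have shift: "jordan_matrix (na # rest) $$ (x, y) = jordan_matrix rest $$ (x - n, y - n)"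
      if "\<not> x < n" "\<not> y < n" "x < n + ?d" "y < n + ?d" for x y
      using that unfolding na jordan_matrix_Cons by (auto simp: dims)
    have "(j \<noteq> i) = (j - n \<noteq> i - n)" "(j = Suc i) = (j - n = Suc (i - n))"
      using False by auto
    moreover have "i - n < ?d" "j - n < ?d" using lt False by auto
    ultimately show ?thesis
      using Cons.IH[of "i - n" "j - n"] False lt by (simp add: shift)
  qed
qed

lemma index_mult_mat_sum:
  assumes "A \<in> carrier_mat n d" "B \<in> carrier_mat d p" "i < n" "j < p"
  shows "(A * B) $$ (i, j) = (\<Sum>k<d. A $$ (i, k) * B $$ (k, j))"
  using assms by (simp add: scalar_prod_def atLeast0LessThan)

lemma sum_lessThan_support_two:
  fixes g :: "nat \<Rightarrow> 'a::comm_monoid_add"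
  assumes "j < d" "\<And>k. k < d \<Longrightarrow> k \<noteq> j \<Longrightarrow> Suc k \<noteq> j \<Longrightarrow> g k = 0"
  shows "(\<Sum>k<d. g k) = g j + (if j = 0 then 0 else g (j - 1))"
proof -
  have "(\<Sum>k<d. g k) = (\<Sum>k\<in>{j, j - 1}. g k)"
  proof (rule sum.mono_neutral_cong_right)
    show "\<forall>k\<in>{..<d} - {j, j - 1}. g k = 0"
      using assms(2) by (metis Diff_iff diff_Suc_1 insertCI lessThan_iff)
  qed (use assms(1) in auto)
  then show ?thesis by (cases j) (simp_all add: add.commute)
qed

(* Jordan normal form in coordinates: c j is the superdiagonal entry of the Jordan matrix in
   column j. *)
lemma complex_matrix_jordan_basis:
  fixes M :: "nat \<Rightarrow> nat \<Rightarrow> complex"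
  obtains P Q :: "nat \<Rightarrow> nat \<Rightarrow> complex" and l c :: "nat \<Rightarrow> complex"
  where "\<And>i j. i < d \<Longrightarrow> j < d \<Longrightarrow> (\<Sum>k<d. P i k * Q k j) = (if i = j then 1 else 0)"
    and "\<And>i j. i < d \<Longrightarrow> j < d \<Longrightarrow> (\<Sum>k<d. Q i k * P k j) = (if i = j then 1 else 0)"
    and "\<And>r j. r < d \<Longrightarrow> j < d \<Longrightarrow> (\<Sum>s<d. M r s * P s j) = l j * P r j + c j * P r (j - 1)"
    and "c 0 = 0"
    and "\<And>j. j < d \<Longrightarrow> c j = 0 \<or> (c j = 1 \<and> l (j - 1) = l j)"
proof -
  define A where "A = mat d d (\<lambda>(i, j). M i j)"
  have A: "A \<in> carrier_mat d d" unfolding A_def by simp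
  obtain as where "char_poly A = (\<Prod>a\<leftarrow>as. [:- a, 1:])"
    using char_poly_factorized[OF A] by blast
  then obtain n_as where "jordan_nf A n_as" using jordan_nf_exists[OF A] by blast
  then obtain P Q where wit: "similar_mat_wit A (jordan_matrix n_as) P Q"
    unfolding jordan_nf_def similar_mat_def by blast
  define J where "J = jordan_matrix n_as"
  have J: "J \<in> carrier_mat d d" and P: "P \<in> carrier_mat d d" and Q: "Q \<in> carrier_mat d d"
    and PQ: "P * Q = 1\<^sub>m d" and QP: "Q * P = 1\<^sub>m d" and AJ: "A = P * J * Q"
    using wit A unfolding similar_mat_wit_def Let_def J_def by auto
  have J_entries: "(j \<noteq> i \<and> j \<noteq> Suc i \<longrightarrow> J $$ (i,j) = 0) \<and>
      (j = Suc i \<longrightarrow> J $$ (i,j) = 0 \<or> (J $$ (i,j) = 1 \<and> J $$ (i,i) = J $$ (j,j)))"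
    if "i < d" "j < d" for i j
    using jordan_matrix_entries[of i n_as j] J that unfolding J_def by auto
  have "A * P = P * J * (Q * P)" using AJ P J Q by (simp add: assoc_mult_mat[of _ d d _ d _ d])
  then have AP: "A * P = P * J" using QP P J by simp
  define c where "c j = (if j = 0 then 0 else J $$ (j - 1, j))" for j
  show thesis
  proof (rule that[of "\<lambda>i j. P $$ (i, j)" "\<lambda>i j. Q $$ (i, j)" "\<lambda>j. J $$ (j, j)" c])
    fix i j assume ij: "i < d" "j < d"
    show "(\<Sum>k<d. Q $$ (i, k) * P $$ (k, j)) = (if i = j then 1 else 0)"
      using index_mult_mat_sum[OF Q P ij] QP ij by simp
    show "(\<Sum>k<d. P $$ (i, k) * Q $$ (k, j)) = (if i = j then 1 else 0)"
      using index_mult_mat_sum[OF P Q ij] PQ ij by simp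
  next
    fix r j assume rj: "r < d" "j < d"
    have "(\<Sum>s<d. M r s * P $$ (s, j)) = (A * P) $$ (r, j)"
      using index_mult_mat_sum[OF A P rj] rj by (simp add: A_def)
    also have "\<dots> = (\<Sum>k<d. P $$ (r, k) * J $$ (k, j))"
      unfolding AP using index_mult_mat_sum[OF P J rj] .
    also have "\<dots> = J $$ (j, j) * P $$ (r, j) + c j * P $$ (r, j - 1)"
      using rj J_entries
      by (subst sum_lessThan_support_two[of j d "\<lambda>k. P $$ (r, k) * J $$ (k, j)"]) (auto simp: c_def)
    finally show "(\<Sum>s<d. M r s * P $$ (s, j)) = J $$ (j, j) * P $$ (r, j) + c j * P $$ (r, j - 1)" .
  next
    show "c 0 = 0" by (simp add: c_def)
  next
    fix j assume "j < d"
    then show "c j = 0 \<or> (c j = 1 \<and> J $$ (j - 1, j - 1) = J $$ (j, j))"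
      using J_entries[of "j - 1" j] by (cases j) (auto simp: c_def)
  qed
qed

lemma hermitian_sum_adjoint:
  fixes M :: "nat \<Rightarrow> nat \<Rightarrow> complex"
  assumes herm: "\<And>i j. i < d \<Longrightarrow> j < d \<Longrightarrow> M i j = cnj (M j i)"
  shows "(\<Sum>r<d. (\<Sum>s<d. M r s * x s) * cnj (y r)) = (\<Sum>r<d. x r * cnj (\<Sum>s<d. M r s * y s))"
proof -
  have "(\<Sum>r<d. (\<Sum>s<d. M r s * x s) * cnj (y r)) = (\<Sum>s<d. \<Sum>r<d. M r s * x s * cnj (y r))"
    unfolding sum_distrib_right by (rule sum.swap)
  also have "\<dots> = (\<Sum>s<d. x s * cnj (\<Sum>r<d. M s r * y r))"
  proof (rule sum.cong[OF refl])
    fix s assume "s \<in> {..<d}"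
    then have "cnj (M s r) = M r s" if "r \<in> {..<d}" for r
      using herm[of r s] that by simp
    then show "(\<Sum>r<d. M r s * x s * cnj (y r)) = x s * cnj (\<Sum>r<d. M s r * y r)"
      by (simp add: cnj_sum sum_distrib_left mult_ac)
  qed
  finally show ?thesis .
qed

lemma sum_mult_cnj_self_neq_0:
  fixes x :: "nat \<Rightarrow> complex"
  assumes "\<exists>k<d. x k \<noteq> 0"
  shows "(\<Sum>r<d. x r * cnj (x r)) \<noteq> 0"
proof -
  have "(\<Sum>r<d. x r * cnj (x r)) = of_real (\<Sum>r<d. (cmod (x r))\<^sup>2)"
    by (simp only: complex_norm_square[symmetric] of_real_sum)
  moreover have "(\<Sum>r<d. (cmod (x r))\<^sup>2) \<noteq> 0"
    using assms by (subst sum_nonneg_eq_0_iff) auto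
  ultimately show ?thesis by (metis of_real_eq_0_iff)
qed

(* <M u, w> = mu <u, w> + <w, w>, while <u, M w> = cnj mu <u, w> and mu is real. *)
lemma hermitian_no_jordan_chain:
  fixes M :: "nat \<Rightarrow> nat \<Rightarrow> complex"
  assumes herm: "\<And>i j. i < d \<Longrightarrow> j < d \<Longrightarrow> M i j = cnj (M j i)"
    and w_nonzero: "\<exists>k<d. w k \<noteq> 0"
    and eigen: "\<And>r. r < d \<Longrightarrow> (\<Sum>s<d. M r s * w s) = \<mu> * w r"
    and chain: "\<And>r. r < d \<Longrightarrow> (\<Sum>s<d. M r s * u s) = \<mu> * u r + w r"
  shows False
proof -
  define ip where "ip x y = (\<Sum>r<d. x r * cnj (y r))" for x y :: "nat \<Rightarrow> complex"
  have adjoint: "ip (\<lambda>r. \<Sum>s<d. M r s * x s) y = ip x (\<lambda>r. \<Sum>s<d. M r s * y s)" for x y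
    unfolding ip_def by (rule hermitian_sum_adjoint[OF herm])
  have ww: "ip w w \<noteq> 0"
    unfolding ip_def by (rule sum_mult_cnj_self_neq_0[OF w_nonzero])
  have eigen_left: "ip (\<lambda>r. \<Sum>s<d. M r s * w s) y = \<mu> * ip w y" for y
    unfolding ip_def by (simp add: eigen sum_distrib_left mult.assoc)
  have eigen_right: "ip y (\<lambda>r. \<Sum>s<d. M r s * w s) = cnj \<mu> * ip y w" for y
  proof -
    have "y r * cnj (\<Sum>s<d. M r s * w s) = cnj \<mu> * (y r * cnj (w r))" if "r < d" for r
      using eigen[OF that] by simp
    then show ?thesis unfolding ip_def sum_distrib_left by (intro sum.cong) auto
  qed
  have "\<mu> * ip w w = cnj \<mu> * ip w w"
    using adjoint[of w w] by (simp add: eigen_left eigen_right)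
  then have real: "cnj \<mu> = \<mu>" using ww by simp
  have "ip (\<lambda>r. \<Sum>s<d. M r s * u s) w = \<mu> * ip u w + ip w w"
    unfolding ip_def by (simp add: chain distrib_right sum.distrib sum_distrib_left mult.assoc)
  also have "ip (\<lambda>r. \<Sum>s<d. M r s * u s) w = \<mu> * ip u w"
    using adjoint[of u w] by (simp add: eigen_right real)
  finally show False using ww by simp
qed

lemma left_inverse_column_nonzero:
  fixes P Q :: "nat \<Rightarrow> nat \<Rightarrow> 'a::semiring_1"
  assumes QP: "\<And>i j. i < d \<Longrightarrow> j < d \<Longrightarrow> (\<Sum>k<d. Q i k * P k j) = (if i = j then 1 else 0)"
    and "k < d"
  shows "\<exists>r<d. P r k \<noteq> 0"
proof (rule ccontr)
  assume "\<not> (\<exists>r<d. P r k \<noteq> 0)"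
  then have "(\<Sum>r<d. Q k r * P r k) = 0" by simp
  with QP[OF \<open>k < d\<close> \<open>k < d\<close>] show False by simp
qed

lemma right_inverse_columns_span:
  fixes P Q :: "nat \<Rightarrow> nat \<Rightarrow> 'a::comm_semiring_1"
  assumes PQ: "\<And>i j. i < d \<Longrightarrow> j < d \<Longrightarrow> (\<Sum>k<d. P i k * Q k j) = (if i = j then 1 else 0)"
  shows "\<exists>a. \<forall>r<d. y r = (\<Sum>k<d. a k * P r k)"
proof (intro exI allI impI)
  fix r assume r: "r < d"
  have "(\<Sum>k<d. (\<Sum>j<d. Q k j * y j) * P r k) = (\<Sum>j<d. (\<Sum>k<d. P r k * Q k j) * y j)"
    unfolding sum_distrib_left sum_distrib_right by (subst sum.swap) (simp add: mult_ac)
  also have "\<dots> = (\<Sum>j<d. if j = r then y r else 0)"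
    using PQ[OF r] by (intro sum.cong) auto
  also have "\<dots> = y r" using r by simp
  finally show "y r = (\<Sum>k<d. (\<Sum>j<d. Q k j * y j) * P r k)" by simp
qed

lemma hermitian_matrix_eigenbasis:
  fixes M :: "nat \<Rightarrow> nat \<Rightarrow> complex"
  assumes herm: "\<And>i j. i < d \<Longrightarrow> j < d \<Longrightarrow> M i j = cnj (M j i)"
  obtains x :: "nat \<Rightarrow> nat \<Rightarrow> complex" and l :: "nat \<Rightarrow> complex"
  where "\<And>k. k < d \<Longrightarrow> \<exists>r<d. x k r \<noteq> 0"
    and "\<And>k r. k < d \<Longrightarrow> r < d \<Longrightarrow> (\<Sum>s<d. M r s * x k s) = l k * x k r"
    and "\<And>y. \<exists>a. \<forall>r<d. y r = (\<Sum>k<d. a k * x k r)"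
proof -
  obtain P Q l c where PQ: "\<And>i j. i < d \<Longrightarrow> j < d \<Longrightarrow> (\<Sum>k<d. P i k * Q k j) = (if i = j then 1 else 0)"
    and QP: "\<And>i j. i < d \<Longrightarrow> j < d \<Longrightarrow> (\<Sum>k<d. Q i k * P k j) = (if i = j then 1 else 0)"
    and column: "\<And>r j. r < d \<Longrightarrow> j < d \<Longrightarrow> (\<Sum>s<d. M r s * P s j) = l j * P r j + c j * P r (j - 1)"
    and c_0: "c 0 = 0" and c: "\<And>j. j < d \<Longrightarrow> c j = 0 \<or> (c j = 1 \<and> l (j - 1) = l j)"
    using complex_matrix_jordan_basis[where d = d and M = M] by blast
  have column_nonzero: "\<exists>r<d. P r k \<noteq> 0" if "k < d" for k
    using left_inverse_column_nonzero[OF QP that] .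
  have c_zero: "c j = 0" if "j < d" for j
    using that
  proof (induction j)
    case 0
    show ?case by (rule c_0)
  next
    case (Suc j)
    show ?case
    proof (rule ccontr)
      assume "c (Suc j) \<noteq> 0"
      with c[OF Suc.prems] have c_Suc: "c (Suc j) = 1" and l_Suc: "l j = l (Suc j)" by auto
      have j: "j < d" using Suc.prems by simp
      then have "c j = 0" by (rule Suc.IH)
      show False
      proof (rule hermitian_no_jordan_chain[OF herm column_nonzero[OF j]])
        fix r assume r: "r < d"
        show "(\<Sum>s<d. M r s * P s j) = l j * P r j"
          using column[OF r j] \<open>c j = 0\<close> by simp
        show "(\<Sum>s<d. M r s * P s (Suc j)) = l j * P r (Suc j) + P r j"
          using column[OF r Suc.prems] c_Suc l_Suc by simp
      qed
    qed
  qed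
  show thesis
  proof (rule that[of "\<lambda>k r. P r k" l])
    show "\<exists>r<d. P r k \<noteq> 0" if "k < d" for k using column_nonzero[OF that] .
    show "(\<Sum>s<d. M r s * P s k) = l k * P r k" if "k < d" "r < d" for k r
      using column[of r k] c_zero[of k] that by simp
    show "\<exists>a. \<forall>r<d. y r = (\<Sum>k<d. a k * P r k)" for y
      using right_inverse_columns_span[OF PQ] .
  qed
qed

section \<open>Tensors and their inner product\<close>

lemma length_ins_at [simp]: "i \<le> length xs \<Longrightarrow> length (ins_at i k xs) = Suc (length xs)"
  unfolding ins_at_def by simp

lemma set_ins_at: "i \<le> length xs \<Longrightarrow> set (ins_at i k xs) = insert k (set xs)"
  unfolding ins_at_def by (metis Un_insert_right append_take_drop_id list.simps(15) set_append)

lemma nth_ins_at [simp]: "i \<le> length xs \<Longrightarrow> ins_at i k xs ! i = k"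
  unfolding ins_at_def by (simp add: nth_append)

lemma del_at_ins_at [simp]: "i \<le> length xs \<Longrightarrow> del_at i (ins_at i k xs) = xs"
  unfolding ins_at_def del_at_def by simp

lemma ins_at_del_at [simp]:
  assumes "i < length xs" "xs ! i = k"
  shows "ins_at i k (del_at i xs) = xs"
proof -
  have "k # drop (Suc i) xs = drop i xs"
    using Cons_nth_drop_Suc[OF assms(1)] assms(2) by simp
  with assms(1) show ?thesis by (simp add: ins_at_def del_at_def)
qed

lemma length_del_at [simp]: "i < length xs \<Longrightarrow> length (del_at i xs) = length xs - 1"
  unfolding del_at_def by simp

lemma set_del_at_subset: "set (del_at i xs) \<subseteq> set xs"
  unfolding del_at_def by (auto dest: in_set_takeD in_set_dropD)

definition tens_index :: "nat \<Rightarrow> nat \<Rightarrow> nat \<Rightarrow> (nat list \<times> nat list) set" where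
  "tens_index N m n = {(I, J). valid_idx N m n I J}"

definition tens_inner :: "nat \<Rightarrow> nat \<Rightarrow> nat \<Rightarrow> tensor \<Rightarrow> tensor \<Rightarrow> complex" where
  "tens_inner N m n S T = (\<Sum>(I, J)\<in>tens_index N m n. S I J * cnj (T I J))"

definition tens_sqnorm :: "nat \<Rightarrow> nat \<Rightarrow> nat \<Rightarrow> tensor \<Rightarrow> real" where
  "tens_sqnorm N m n T = (\<Sum>(I, J)\<in>tens_index N m n. (cmod (T I J))\<^sup>2)"

definition tens_unit :: "nat list \<times> nat list \<Rightarrow> tensor" where
  "tens_unit p = (\<lambda>I J. if (I, J) = p then 1 else 0)"

lemma mem_tens_index [simp]: "(I, J) \<in> tens_index N m n \<longleftrightarrow> valid_idx N m n I J"
  unfolding tens_index_def by simp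

lemma finite_tens_index [simp]: "finite (tens_index N m n)"
proof -
  have "tens_index N m n \<subseteq>
      {I. set I \<subseteq> {..<N} \<and> length I = m} \<times> {J. set J \<subseteq> {..<N} \<and> length J = n}"
    unfolding tens_index_def valid_idx_def by auto
  then show ?thesis
    by (rule finite_subset) (intro finite_cartesian_product finite_lists_length_eq; simp)
qed

lemma tens_eqI:
  assumes "S \<in> tens N m n" "T \<in> tens N m n"
    and "\<And>I J. (I, J) \<in> tens_index N m n \<Longrightarrow> S I J = T I J"
  shows "S = T"
proof (intro ext)
  fix I J
  show "S I J = T I J"
    using assms unfolding tens_def tens_index_def by (cases "valid_idx N m n I J") auto
qed

lemma zero_in_tens [simp]: "(\<lambda>I J. 0) \<in> tens N m n"
  unfolding tens_def by simp

lemma tens_lincomb: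
  "(\<And>x. x \<in> F \<Longrightarrow> f x \<in> tens N m n) \<Longrightarrow> (\<lambda>I J. \<Sum>x\<in>F. c x * f x I J) \<in> tens N m n"
  unfolding tens_def by auto

lemma tens_unit_in_tens: "p \<in> tens_index N m n \<Longrightarrow> tens_unit p \<in> tens N m n"
  unfolding tens_unit_def tens_def tens_index_def by auto

lemma tr_in_tens: "tr N m n a b T \<in> tens N (m - 1) (n - 1)"
  unfolding tens_def tr_def by auto

lemma trp_in_tens: "trp N m n a b S \<in> tens N m n"
  unfolding tens_def trp_def by auto

lemma opA_in_tens: "opA N m n T \<in> tens N m n"
  unfolding opA_def tau_def comp_def using trp_in_tens by (auto simp: tens_def)

lemma V1_subset_tens: "V1 N m n \<subseteq> tens N m n"
  unfolding V1_def tens_def trp_def by auto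

lemma tr_lincomb:
  "tr N m n a b (\<lambda>I J. \<Sum>x\<in>F. c x * f x I J) = (\<lambda>I J. \<Sum>x\<in>F. c x * tr N m n a b (f x) I J)"
  unfolding tr_def by (auto intro!: ext simp: sum_distrib_left intro: sum.swap)

lemma trp_lincomb:
  "trp N m n a b (\<lambda>I J. \<Sum>x\<in>F. c x * f x I J) = (\<lambda>I J. \<Sum>x\<in>F. c x * trp N m n a b (f x) I J)"
  unfolding trp_def by (auto intro!: ext)

lemma opA_lincomb:
  "opA N m n (\<lambda>I J. \<Sum>x\<in>F. c x * f x I J) = (\<lambda>I J. \<Sum>x\<in>F. c x * opA N m n (f x) I J)"
  unfolding opA_def tau_def comp_def tr_lincomb trp_lincomb
  by (simp add: sum_distrib_left sum.swap[of _ F])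

lemma tens_inner_sum_left:
  "tens_inner N m n (\<lambda>I J. \<Sum>x\<in>F. f x I J) T = (\<Sum>x\<in>F. tens_inner N m n (f x) T)"
  unfolding tens_inner_def by (simp add: sum_distrib_right case_prod_beta sum.swap[of _ F])

lemma tens_inner_commute: "tens_inner N m n S T = cnj (tens_inner N m n T S)"
  unfolding tens_inner_def by (simp add: case_prod_beta mult.commute)

lemma tens_inner_self: "tens_inner N m n T T = of_real (tens_sqnorm N m n T)"
  unfolding tens_inner_def tens_sqnorm_def of_real_sum
  by (intro sum.cong refl) (auto simp del: of_real_power simp: complex_norm_square)

lemma tens_inner_tens_unit:
  assumes "p \<in> tens_index N m n"
  shows "tens_inner N m n T (tens_unit p) = T (fst p) (snd p)"
proof -
  have "tens_inner N m n T (tens_unit p) = (\<Sum>q\<in>tens_index N m n. if q = p then T (fst p) (snd p) else 0)"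
    unfolding tens_inner_def tens_unit_def by (intro sum.cong) auto
  then show ?thesis using assms by simp
qed

lemma tens_sqnorm_nonneg: "tens_sqnorm N m n T \<ge> 0"
  unfolding tens_sqnorm_def by (intro sum_nonneg) auto

lemma tens_sqnorm_eq_0_iff:
  assumes "T \<in> tens N m n"
  shows "tens_sqnorm N m n T = 0 \<longleftrightarrow> T = (\<lambda>I J. 0)"
proof
  assume "tens_sqnorm N m n T = 0"
  then have "\<forall>(I, J)\<in>tens_index N m n. (cmod (T I J))\<^sup>2 = 0"
    unfolding tens_sqnorm_def by (subst (asm) sum_nonneg_eq_0_iff) auto
  then show "T = (\<lambda>I J. 0)" by (intro tens_eqI[OF assms zero_in_tens]) auto
qed (simp add: tens_sqnorm_def)

lemma bij_betw_ins_at_pair: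
  assumes "i \<le> m" "j \<le> n"
  shows "bij_betw (\<lambda>((I, J), k). (ins_at i k I, ins_at j k J))
      (tens_index N m n \<times> {..<N}) {(I, J) \<in> tens_index N (Suc m) (Suc n). I ! i = J ! j}"
proof -
  let ?ins = "\<lambda>((I, J), k). (ins_at i k I, ins_at j k J)"
  let ?del = "\<lambda>(I, J). ((del_at i I, del_at j J), I ! i)"
  let ?diag = "{(I, J) \<in> tens_index N (Suc m) (Suc n). I ! i = J ! j}"
  show ?thesis
  proof (rule bij_betw_byWitness[where f' = ?del])
    show "\<forall>q\<in>tens_index N m n \<times> {..<N}. ?del (?ins q) = q"
      using assms by (auto simp: valid_idx_def)
    show "?ins ` (tens_index N m n \<times> {..<N}) \<subseteq> ?diag"
      using assms by (auto simp: valid_idx_def set_ins_at)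
    show "\<forall>p\<in>?diag. ?ins (?del p) = p"
    proof
      fix p assume "p \<in> ?diag"
      then obtain I J where "p = (I, J)" "valid_idx N (Suc m) (Suc n) I J" "I ! i = J ! j"
        by auto
      with assms show "?ins (?del p) = p" by (simp add: valid_idx_def)
    qed
    show "?del ` ?diag \<subseteq> tens_index N m n \<times> {..<N}"
    proof
      fix q assume "q \<in> ?del ` ?diag"
      then obtain I J where q: "q = ((del_at i I, del_at j J), I ! i)"
        and valid: "valid_idx N (Suc m) (Suc n) I J" by auto
      then have "I ! i \<in> set I" using assms by (simp add: valid_idx_def)
      then have "I ! i < N" using valid unfolding valid_idx_def by blast
      then show "q \<in> tens_index N m n \<times> {..<N}"
        using valid assms set_del_at_subset[of i I] set_del_at_subset[of j J]
        by (auto simp: q valid_idx_def)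
    qed
  qed
qed

lemma tens_inner_trp_tr:
  assumes "a \<in> {1..m}" "b \<in> {1..n}"
  shows "tens_inner N m n (trp N m n a b S) T = tens_inner N (m - 1) (n - 1) S (tr N m n a b T)"
proof -
  let ?ins = "\<lambda>((I, J), k). (ins_at (a - 1) k I, ins_at (b - 1) k J)"
  let ?diag = "{(I, J) \<in> tens_index N m n. I ! (a - 1) = J ! (b - 1)}"
  have bij: "bij_betw ?ins (tens_index N (m - 1) (n - 1) \<times> {..<N}) ?diag"
  proof -
    have "a - 1 \<le> m - 1" "b - 1 \<le> n - 1" "Suc (m - 1) = m" "Suc (n - 1) = n"
      using assms by auto
    then show ?thesis using bij_betw_ins_at_pair[of "a - 1" "m - 1" "b - 1" "n - 1" N] by simp
  qed
  have "tens_inner N m n (trp N m n a b S) T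
      = (\<Sum>(I, J)\<in>?diag. S (del_at (a - 1) I) (del_at (b - 1) J) * cnj (T I J))"
    unfolding tens_inner_def trp_def by (rule sum.mono_neutral_cong_right) (auto split: if_splits)
  also have "\<dots> = (\<Sum>q\<in>tens_index N (m - 1) (n - 1) \<times> {..<N}.
      (\<lambda>(I, J). S (del_at (a - 1) I) (del_at (b - 1) J) * cnj (T I J)) (?ins q))"
    by (rule sum.reindex_bij_betw[OF bij, symmetric])
  also have "\<dots> = (\<Sum>((I, J), k)\<in>tens_index N (m - 1) (n - 1) \<times> {..<N}.
      S I J * cnj (T (ins_at (a - 1) k I) (ins_at (b - 1) k J)))"
  proof (rule sum.cong[OF refl])
    fix q assume q: "q \<in> tens_index N (m - 1) (n - 1) \<times> {..<N}"
    obtain I J k where q_eq: "q = ((I, J), k)" by (metis surj_pair)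
    have "a - 1 \<le> length I" "b - 1 \<le> length J"
      using q assms by (auto simp: q_eq valid_idx_def)
    then show "(\<lambda>(I, J). S (del_at (a - 1) I) (del_at (b - 1) J) * cnj (T I J)) (?ins q)
        = (\<lambda>((I, J), k). S I J * cnj (T (ins_at (a - 1) k I) (ins_at (b - 1) k J))) q"
      by (simp add: q_eq)
  qed
  also have "\<dots> = (\<Sum>(I, J)\<in>tens_index N (m - 1) (n - 1).
      \<Sum>k<N. S I J * cnj (T (ins_at (a - 1) k I) (ins_at (b - 1) k J)))"
    by (subst sum.cartesian_product[symmetric]) (simp add: case_prod_beta)
  also have "\<dots> = tens_inner N (m - 1) (n - 1) S (tr N m n a b T)"
    unfolding tens_inner_def tr_def by (intro sum.cong refl) (auto simp: sum_distrib_left cnj_sum)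
  finally show ?thesis .
qed

section \<open>Self-adjoint maps of tensors are diagonalisable\<close>

definition tens_of_coords :: "(nat list \<times> nat list) list \<Rightarrow> (nat \<Rightarrow> complex) \<Rightarrow> tensor" where
  "tens_of_coords L x = (\<lambda>I J. \<Sum>i<length L. x i * tens_unit (L ! i) I J)"

lemma tens_of_coords_in_tens: "set L \<subseteq> tens_index N m n \<Longrightarrow> tens_of_coords L x \<in> tens N m n"
  unfolding tens_of_coords_def by (intro tens_lincomb tens_unit_in_tens) auto

lemma tens_of_coords_nth:
  assumes "distinct L" "r < length L"
  shows "tens_of_coords L x (fst (L ! r)) (snd (L ! r)) = x r"
proof -
  have "tens_of_coords L x (fst (L ! r)) (snd (L ! r)) = (\<Sum>i<length L. if i = r then x r else 0)"
    unfolding tens_of_coords_def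
    using assms by (intro sum.cong) (auto simp: tens_unit_def nth_eq_iff_index_eq)
  then show ?thesis using assms(2) by simp
qed

lemma tens_eq_enumI:
  assumes "set L = tens_index N m n" "S \<in> tens N m n" "T \<in> tens N m n"
    and "\<And>r. r < length L \<Longrightarrow> S (fst (L ! r)) (snd (L ! r)) = T (fst (L ! r)) (snd (L ! r))"
  shows "S = T"
proof (rule tens_eqI[OF assms(2,3)])
  fix I J assume "(I, J) \<in> tens_index N m n"
  then obtain r where "r < length L" "L ! r = (I, J)"
    unfolding assms(1)[symmetric] in_set_conv_nth by blast
  then show "S I J = T I J" using assms(4)[of r] by simp
qed

lemma tens_of_coords_span:
  assumes L: "set L = tens_index N m n" "distinct L"
    and span: "\<And>y. \<exists>a. \<forall>r<length L. y r = (\<Sum>k<length L. a k * x k r)"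
    and T: "T \<in> tens N m n"
  shows "\<exists>a. T = (\<lambda>I J. \<Sum>k<length L. a k * tens_of_coords L (x k) I J)"
proof -
  obtain a where a: "\<forall>r<length L. T (fst (L ! r)) (snd (L ! r)) = (\<Sum>k<length L. a k * x k r)"
    using span[of "\<lambda>r. T (fst (L ! r)) (snd (L ! r))"] by blast
  have "T = (\<lambda>I J. \<Sum>k<length L. a k * tens_of_coords L (x k) I J)"
  proof (rule tens_eq_enumI[OF L(1) T])
    show "(\<lambda>I J. \<Sum>k<length L. a k * tens_of_coords L (x k) I J) \<in> tens N m n"
      using L(1) by (intro tens_lincomb tens_of_coords_in_tens) simp
    show "T (fst (L ! r)) (snd (L ! r)) =
        (\<Sum>k<length L. a k * tens_of_coords L (x k) (fst (L ! r)) (snd (L ! r)))"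
      if "r < length L" for r
      using a that by (simp add: tens_of_coords_nth[OF L(2)])
  qed
  then show ?thesis by blast
qed

lemma diagonalisable_on_tens_coordinate_eigenbasis:
  fixes f :: "tensor \<Rightarrow> tensor"
  assumes L: "set L = tens_index N m n" "distinct L"
    and maps: "\<And>T. T \<in> tens N m n \<Longrightarrow> f T \<in> tens N m n"
    and lincomb: "\<And>F c (g :: nat \<Rightarrow> tensor).
      f (\<lambda>I J. \<Sum>x\<in>F. c x * g x I J) = (\<lambda>I J. \<Sum>x\<in>F. c x * f (g x) I J)"
    and x_nonzero: "\<And>k. k < length L \<Longrightarrow> \<exists>r<length L. x k r \<noteq> 0"
    and x_eigen: "\<And>k r. k < length L \<Longrightarrow> r < length L \<Longrightarrow>
      (\<Sum>s<length L. f (tens_unit (L ! s)) (fst (L ! r)) (snd (L ! r)) * x k s) = l k * x k r"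
    and x_span: "\<And>y. \<exists>a. \<forall>r<length L. y r = (\<Sum>k<length L. a k * x k r)"
  shows "diagonalisable_on (tens N m n) f"
proof -
  define v where "v k = tens_of_coords L (x k)" for k
  have v: "v k \<in> tens N m n" for k
    unfolding v_def using L(1) by (simp add: tens_of_coords_in_tens)
  have eigen: "f (v k) = (\<lambda>I J. l k * v k I J)" if "k < length L" for k
  proof (rule tens_eq_enumI[OF L(1)])
    show "f (v k) \<in> tens N m n" using v by (rule maps)
    show "(\<lambda>I J. l k * v k I J) \<in> tens N m n" using v by (auto simp: tens_def)
    fix r assume r: "r < length L"
    have "f (v k) (fst (L ! r)) (snd (L ! r)) = l k * x k r"
      using x_eigen[OF that r] unfolding v_def tens_of_coords_def lincomb by (simp add: mult.commute)
    then show "f (v k) (fst (L ! r)) (snd (L ! r)) = l k * v k (fst (L ! r)) (snd (L ! r))"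
      by (simp add: v_def tens_of_coords_nth[OF L(2) r])
  qed
  have nonzero: "v k \<noteq> (\<lambda>I J. 0)" if "k < length L" for k
  proof
    assume v_0: "v k = (\<lambda>I J. 0)"
    obtain r where "r < length L" "x k r \<noteq> 0" using x_nonzero \<open>k < length L\<close> by blast
    with tens_of_coords_nth[OF L(2), of r "x k"] show False by (simp add: v_0[unfolded v_def])
  qed
  have span: "\<exists>a. T = (\<lambda>I J. \<Sum>k<length L. a k * v k I J)" if "T \<in> tens N m n" for T
    unfolding v_def using tens_of_coords_span[OF L x_span that] .
  show ?thesis
    unfolding diagonalisable_on_def using v nonzero eigen span by blast
qed

lemma selfadjoint_diagonalisable_on_tens:
  fixes f :: "tensor \<Rightarrow> tensor"
  assumes maps: "\<And>T. T \<in> tens N m n \<Longrightarrow> f T \<in> tens N m n"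
    and lincomb: "\<And>F c (g :: nat \<Rightarrow> tensor).
      f (\<lambda>I J. \<Sum>x\<in>F. c x * g x I J) = (\<lambda>I J. \<Sum>x\<in>F. c x * f (g x) I J)"
    and selfadjoint: "\<And>S T. S \<in> tens N m n \<Longrightarrow> T \<in> tens N m n \<Longrightarrow>
      tens_inner N m n (f S) T = tens_inner N m n S (f T)"
  shows "diagonalisable_on (tens N m n) f"
proof -
  obtain L where L: "set L = tens_index N m n" "distinct L"
    using finite_distinct_list[OF finite_tens_index] by blast
  have index: "L ! i \<in> tens_index N m n" if "i < length L" for i
    using L(1) nth_mem that by blast
  define M where "M r j = f (tens_unit (L ! j)) (fst (L ! r)) (snd (L ! r))" for r j
  have M_inner: "M r j = tens_inner N m n (f (tens_unit (L ! j))) (tens_unit (L ! r))"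
    if "r < length L" for r j
    unfolding M_def using tens_inner_tens_unit[OF index[OF that]] by simp
  have hermitian: "M r j = cnj (M j r)" if "r < length L" "j < length L" for r j
  proof -
    have "M r j = tens_inner N m n (tens_unit (L ! j)) (f (tens_unit (L ! r)))"
      using M_inner[OF that(1)] index that by (simp add: selfadjoint tens_unit_in_tens)
    also have "\<dots> = cnj (M j r)"
      using M_inner[OF that(2)] by (simp add: tens_inner_commute[of N m n "tens_unit (L ! j)"])
    finally show ?thesis .
  qed
  obtain x l where x_nonzero: "\<And>k. k < length L \<Longrightarrow> \<exists>r<length L. x k r \<noteq> 0"
    and x_eigen: "\<And>k r. k < length L \<Longrightarrow> r < length L \<Longrightarrow>
      (\<Sum>s<length L. M r s * x k s) = l k * x k r"
    and x_span: "\<And>y. \<exists>a. \<forall>r<length L. y r = (\<Sum>k<length L. a k * x k r)"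
    using hermitian_matrix_eigenbasis[of "length L" M] hermitian by blast
  show ?thesis
    using diagonalisable_on_tens_coordinate_eigenbasis[OF L maps lincomb x_nonzero
        x_eigen[unfolded M_def] x_span] .
qed

lemma diagonalisable_on_tens_decomp:
  fixes f :: "tensor \<Rightarrow> tensor"
  assumes diag: "diagonalisable_on (tens N m n) f"
    and lincomb: "\<And>F c (g :: nat \<Rightarrow> tensor).
      f (\<lambda>I J. \<Sum>x\<in>F. c x * g x I J) = (\<lambda>I J. \<Sum>x\<in>F. c x * f (g x) I J)"
    and T: "T \<in> tens N m n"
  obtains T0 X where "T0 \<in> tens N m n" "f T0 = (\<lambda>I J. 0)" "X \<in> tens N m n"
    "T = (\<lambda>I J. T0 I J + f X I J)"
proof -
  obtain K :: nat and v l where eigenvectors: "\<forall>k<K. v k \<in> tens N m n \<and> v k \<noteq> (\<lambda>I J. 0) \<and>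
      f (v k) = (\<lambda>I J. l k * v k I J)"
    and span: "\<forall>T\<in>tens N m n. \<exists>c. T = (\<lambda>I J. \<Sum>k<K. c k * v k I J)"
    using diag unfolding diagonalisable_on_def by blast
  have v: "v k \<in> tens N m n" and eigen: "f (v k) = (\<lambda>I J. l k * v k I J)" if "k < K" for k
    using eigenvectors that by auto
  obtain c where c: "T = (\<lambda>I J. \<Sum>k<K. c k * v k I J)" using span T by blast
  define T0 where "T0 = (\<lambda>I J. \<Sum>k<K. (if l k = 0 then c k else 0) * v k I J)"
  define X where "X = (\<lambda>I J. \<Sum>k<K. (if l k = 0 then 0 else c k / l k) * v k I J)"
  have "f T0 = (\<lambda>I J. 0)"
    unfolding T0_def lincomb by (intro ext sum.neutral) (simp add: eigen)
  moreover have "f X = (\<lambda>I J. \<Sum>k<K. (if l k = 0 then 0 else c k) * v k I J)"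
    unfolding X_def lincomb by (intro ext sum.cong) (simp_all add: eigen)
  moreover have "T = (\<lambda>I J. T0 I J + f X I J)"
    unfolding calculation(2) T0_def c
    by (auto simp: sum.distrib[symmetric] distrib_right[symmetric] intro!: ext sum.cong)
  moreover have "T0 \<in> tens N m n" "X \<in> tens N m n"
    unfolding T0_def X_def by (auto intro!: tens_lincomb v)
  ultimately show thesis using that by blast
qed

section \<open>The operator A\<close>

lemma tens_inner_opA:
  "tens_inner N m n (opA N m n S) T =
    (\<Sum>a\<in>{1..m}. \<Sum>b\<in>{1..n}. tens_inner N (m - 1) (n - 1) (tr N m n a b S) (tr N m n a b T))"
  unfolding opA_def tau_def comp_def by (simp add: tens_inner_sum_left tens_inner_trp_tr)

lemma opA_selfadjoint: "tens_inner N m n (opA N m n S) T = tens_inner N m n S (opA N m n T)"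
proof -
  have "tens_inner N m n S (opA N m n T) = cnj (tens_inner N m n (opA N m n T) S)"
    by (rule tens_inner_commute)
  also have "\<dots> = (\<Sum>a\<in>{1..m}. \<Sum>b\<in>{1..n}.
      cnj (tens_inner N (m - 1) (n - 1) (tr N m n a b T) (tr N m n a b S)))"
    by (simp add: tens_inner_opA cnj_sum)
  also have "\<dots> = tens_inner N m n (opA N m n S) T"
    unfolding tens_inner_opA by (intro sum.cong refl) (rule tens_inner_commute[symmetric])
  finally show ?thesis ..
qed

lemma tens_inner_opA_self:
  "tens_inner N m n (opA N m n T) T =
    of_real (\<Sum>a\<in>{1..m}. \<Sum>b\<in>{1..n}. tens_sqnorm N (m - 1) (n - 1) (tr N m n a b T))"
  by (simp add: tens_inner_opA tens_inner_self)

lemma opA_eq_0_iff: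
  assumes "T \<in> tens N m n"
  shows "opA N m n T = (\<lambda>I J. 0) \<longleftrightarrow> T \<in> V0 N m n"
proof
  assume opA_0: "opA N m n T = (\<lambda>I J. 0)"
  have "of_real (\<Sum>a\<in>{1..m}. \<Sum>b\<in>{1..n}. tens_sqnorm N (m - 1) (n - 1) (tr N m n a b T))
      = tens_inner N m n (opA N m n T) T"
    by (rule tens_inner_opA_self[symmetric])
  also have "\<dots> = 0" by (simp add: opA_0 tens_inner_def)
  finally have "(\<Sum>a\<in>{1..m}. \<Sum>b\<in>{1..n}. tens_sqnorm N (m - 1) (n - 1) (tr N m n a b T)) = 0"
    by (simp only: of_real_eq_0_iff)
  then have "tens_sqnorm N (m - 1) (n - 1) (tr N m n a b T) = 0" if "a \<in> {1..m}" "b \<in> {1..n}" for a b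
    using that by (simp add: sum_nonneg_eq_0_iff sum_nonneg tens_sqnorm_nonneg)
  then show "T \<in> V0 N m n"
    using assms by (simp add: V0_def tens_sqnorm_eq_0_iff[OF tr_in_tens, symmetric])
next
  assume "T \<in> V0 N m n"
  then show "opA N m n T = (\<lambda>I J. 0)"
    by (auto simp: V0_def opA_def tau_def trp_def intro!: ext sum.neutral)
qed

lemma V0_Int_V1: "V0 N m n \<inter> V1 N m n = {\<lambda>I J. 0}"
proof (intro equalityI subsetI)
  fix T assume T: "T \<in> V0 N m n \<inter> V1 N m n"
  then obtain S where S: "T = (\<lambda>I J. \<Sum>a\<in>{1..m}. \<Sum>b\<in>{1..n}. trp N m n a b (S a b) I J)"
    unfolding V1_def by blast
  have "tens_inner N m n T T =
      (\<Sum>a\<in>{1..m}. \<Sum>b\<in>{1..n}. tens_inner N (m - 1) (n - 1) (S a b) (tr N m n a b T))"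
    by (subst (1) S) (simp add: tens_inner_sum_left tens_inner_trp_tr)
  also have "\<dots> = 0" using T by (simp add: V0_def tens_inner_def)
  finally have "tens_sqnorm N m n T = 0" by (simp add: tens_inner_self)
  then show "T \<in> {\<lambda>I J. 0}" using T by (simp add: V0_def tens_sqnorm_eq_0_iff)
next
  fix T :: tensor assume "T \<in> {\<lambda>I J. 0}"
  then show "T \<in> V0 N m n \<inter> V1 N m n"
    by (auto simp: V0_def V1_def tens_def tr_def trp_def intro!: exI[of _ "\<lambda>a b I J. 0"] ext)
qed

lemma opA_diagonalisable: "diagonalisable_on (tens N m n) (opA N m n)"
  using opA_in_tens opA_lincomb opA_selfadjoint by (rule selfadjoint_diagonalisable_on_tens)

lemma V1_diff:
  assumes "S \<in> V1 N m n" "T \<in> V1 N m n"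
  shows "(\<lambda>I J. S I J - T I J) \<in> V1 N m n"
proof -
  obtain R where R: "\<forall>a\<in>{1..m}. \<forall>b\<in>{1..n}. R a b \<in> tens N (m - 1) (n - 1)"
    and S: "S = (\<lambda>I J. \<Sum>a\<in>{1..m}. \<Sum>b\<in>{1..n}. trp N m n a b (R a b) I J)"
    using assms(1) unfolding V1_def by blast
  obtain R' where R': "\<forall>a\<in>{1..m}. \<forall>b\<in>{1..n}. R' a b \<in> tens N (m - 1) (n - 1)"
    and T: "T = (\<lambda>I J. \<Sum>a\<in>{1..m}. \<Sum>b\<in>{1..n}. trp N m n a b (R' a b) I J)"
    using assms(2) unfolding V1_def by blast
  show ?thesis
    unfolding V1_def
  proof (intro CollectI exI conjI)
    show "\<forall>a\<in>{1..m}. \<forall>b\<in>{1..n}. (\<lambda>I J. R a b I J - R' a b I J) \<in> tens N (m - 1) (n - 1)"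
      using R R' by (simp add: tens_def)
    show "(\<lambda>I J. S I J - T I J) =
        (\<lambda>I J. \<Sum>a\<in>{1..m}. \<Sum>b\<in>{1..n}. trp N m n a b (\<lambda>I J. R a b I J - R' a b I J) I J)"
    proof -
      have "trp N m n a b (\<lambda>I J. R a b I J - R' a b I J) I J =
          trp N m n a b (R a b) I J - trp N m n a b (R' a b) I J" for a b I J
        by (simp add: trp_def)
      then show ?thesis unfolding S T by (simp add: sum_subtractf)
    qed
  qed
qed

lemma opA_in_V1: "opA N m n T \<in> V1 N m n"
  unfolding V1_def opA_def tau_def comp_def
  by (intro CollectI exI[of _ "\<lambda>a b. tr N m n a b T"]) (blast intro: tr_in_tens)

lemma opA_image: "opA N m n ` tens N m n = V1 N m n"
proof (intro equalityI subsetI)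
  fix T assume "T \<in> opA N m n ` tens N m n"
  then show "T \<in> V1 N m n" using opA_in_V1 by blast
next
  fix T assume T: "T \<in> V1 N m n"
  obtain T0 X where T0: "T0 \<in> tens N m n" "opA N m n T0 = (\<lambda>I J. 0)" and X: "X \<in> tens N m n"
    and T_eq: "T = (\<lambda>I J. T0 I J + opA N m n X I J)"
    using diagonalisable_on_tens_decomp[OF opA_diagonalisable opA_lincomb] T V1_subset_tens by blast
  have "T0 = (\<lambda>I J. T I J - opA N m n X I J)" using T_eq by simp
  then have "T0 \<in> V1 N m n" using V1_diff[OF T opA_in_V1] by simp
  moreover have "T0 \<in> V0 N m n" using T0 opA_eq_0_iff by blast
  ultimately have "T0 = (\<lambda>I J. 0)" using V0_Int_V1 by blast
  then show "T \<in> opA N m n ` tens N m n" using T_eq X by auto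
qed

lemma V0_plus_V1: "{(\<lambda>I J. S I J + T I J) | S T. S \<in> V0 N m n \<and> T \<in> V1 N m n} = tens N m n"
proof (intro equalityI subsetI)
  fix U assume "U \<in> {(\<lambda>I J. S I J + T I J) | S T. S \<in> V0 N m n \<and> T \<in> V1 N m n}"
  then obtain S T where "S \<in> V0 N m n" "T \<in> V1 N m n" and U: "U = (\<lambda>I J. S I J + T I J)"
    by blast
  then have "S \<in> tens N m n" "T \<in> tens N m n" using V1_subset_tens by (auto simp: V0_def)
  then show "U \<in> tens N m n" unfolding U by (simp add: tens_def)
next
  fix U assume "U \<in> tens N m n"
  then obtain T0 X where "T0 \<in> tens N m n" "opA N m n T0 = (\<lambda>I J. 0)"
    and "U = (\<lambda>I J. T0 I J + opA N m n X I J)"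
    using diagonalisable_on_tens_decomp[OF opA_diagonalisable opA_lincomb] by blast
  then show "U \<in> {(\<lambda>I J. S I J + T I J) | S T. S \<in> V0 N m n \<and> T \<in> V1 N m n}"
    using opA_eq_0_iff opA_in_V1 by blast
qed

lemma opA_eigenvalue_real_nonneg:
  assumes T: "T \<in> tens N m n" "T \<noteq> (\<lambda>I J. 0)" and eigen: "opA N m n T = (\<lambda>I J. \<mu> * T I J)"
  shows "\<mu> \<in> \<real> \<and> Re \<mu> \<ge> 0"
proof -
  define R where "R = (\<Sum>a\<in>{1..m}. \<Sum>b\<in>{1..n}. tens_sqnorm N (m - 1) (n - 1) (tr N m n a b T))"
  define r where "r = tens_sqnorm N m n T"
  have "R \<ge> 0" unfolding R_def by (intro sum_nonneg tens_sqnorm_nonneg)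
  have "r > 0"
    using tens_sqnorm_nonneg[of N m n T] tens_sqnorm_eq_0_iff[OF T(1)] T(2) unfolding r_def by simp
  have "of_real R = tens_inner N m n (opA N m n T) T"
    unfolding R_def by (rule tens_inner_opA_self[symmetric])
  also have "\<dots> = \<mu> * tens_inner N m n T T"
    unfolding eigen tens_inner_def by (simp add: sum_distrib_left mult.assoc case_prod_beta)
  also have "\<dots> = \<mu> * of_real r" unfolding r_def by (simp add: tens_inner_self)
  finally have "\<mu> = of_real (R / r)" using \<open>r > 0\<close> by (simp add: field_simps)
  then show ?thesis using \<open>R \<ge> 0\<close> \<open>r > 0\<close> by simp
qed

theorem lemma2p1:
  fixes N m n :: nat
  assumes "m \<ge> 1" and "n \<ge> 1" and "N \<ge> 1"
  shows "(\<forall>T\<in>tens N m n. opA N m n T \<in> tens N m n)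
    \<and> diagonalisable_on (tens N m n) (opA N m n)
    \<and> {T \<in> tens N m n. opA N m n T = (\<lambda>I J. 0)} = V0 N m n
    \<and> opA N m n ` tens N m n = V1 N m n
    \<and> V0 N m n \<inter> V1 N m n = {\<lambda>I J. 0}
    \<and> {(\<lambda>I J. S I J + T I J) | S T. S \<in> V0 N m n \<and> T \<in> V1 N m n} = tens N m n
    \<and> (\<forall>\<mu> T. T \<in> tens N m n \<and> T \<noteq> (\<lambda>I J. 0) \<and> opA N m n T = (\<lambda>I J. \<mu> * T I J)
          \<longrightarrow> \<mu> \<in> \<real> \<and> Re \<mu> \<ge> 0)"
proof -
  have kernel: "{T \<in> tens N m n. opA N m n T = (\<lambda>I J. 0)} = V0 N m n"
    using opA_eq_0_iff by (auto simp: V0_def)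
  have eigenvalues: "\<forall>\<mu> T. T \<in> tens N m n \<and> T \<noteq> (\<lambda>I J. 0) \<and> opA N m n T = (\<lambda>I J. \<mu> * T I J)
      \<longrightarrow> \<mu> \<in> \<real> \<and> Re \<mu> \<ge> 0"
    using opA_eigenvalue_real_nonneg by blast
  show ?thesis
    by (intro conjI ballI opA_in_tens opA_diagonalisable kernel opA_image V0_Int_V1 V0_plus_V1
        eigenvalues)
qed

end
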